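(* Let $G$ be a connected edge-stable equimatchable graph with at least $3$ vertices. Then $\nu(G)=\nu(G\setminus e)$ for every $e\in E(G)$.
   Context: All graphs are finite and simple. A graph is equimatchable if all its maximal matchings have the same cardinality; an equimatchable graph $G$ is edge-stable if $G\setminus e$ (delete edge $e$, keep vertices) is equimatchable for every $e\in E(G)$. $\nu(H)$ is the maximum size of a matching of $H$. *)

theory Defs
  imports Main
begin

definition graph :: "'a set \<Rightarrow> 'a set set \<Rightarrow> bool" where
  "graph V E \<longleftrightarrow> finite V \<and> (\<forall>e\<in>E. e \<subseteq> V \<and> card e = 2)"

definition matching :: "'a set set \<Rightarrow> 'a set set \<Rightarrow> bool" where
  "matching E M \<longleftrightarrow> M \<subseteq> E \<and> (\<forall>e1\<in>M. \<forall>e2\<in>M. e1 \<noteq> e2 \<longrightarrow> e1 \<inter> e2 = {})"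

definition maximal_matching :: "'a set set \<Rightarrow> 'a set set \<Rightarrow> bool" where
  "maximal_matching E M \<longleftrightarrow> matching E M \<and> (\<forall>M'. matching E M' \<and> M \<subseteq> M' \<longrightarrow> M' = M)"

text \<open>Matching number nu(G): maximum size of a matching (E finite).\<close>
definition matching_number :: "'a set set \<Rightarrow> nat" where
  "matching_number E = Max (card ` {M. matching E M})"

definition equimatchable :: "'a set set \<Rightarrow> bool" where
  "equimatchable E \<longleftrightarrow>
     (\<forall>M1 M2. maximal_matching E M1 \<and> maximal_matching E M2 \<longrightarrow> card M1 = card M2)"

text \<open>G minus e keeps the vertices; only the edge set changes.\<close>
definition edge_stable :: "'a set set \<Rightarrow> bool" where
  "edge_stable E \<longleftrightarrow> equimatchable E \<and> (\<forall>e\<in>E. equimatchable (E - {e}))"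

definition connected :: "'a set \<Rightarrow> 'a set set \<Rightarrow> bool" where
  "connected V E \<longleftrightarrow>
     (\<forall>u\<in>V. \<forall>v\<in>V. (u, v) \<in> {(x, y). {x, y} \<in> E}\<^sup>*)"

end

theory Submission
  imports Defs
begin

text \<open>Since \<open>G\<close> is connected and has a vertex
  outside \<open>e\<close>, some edge \<open>f \<noteq> e\<close> meets \<open>e\<close>. A maximal matching containing \<open>f\<close> avoids \<open>e\<close>, and in an
  equimatchable graph every maximal matching is maximum; so \<open>\<nu>(G) \<le> \<nu>(G \ e) \<le> \<nu>(G)\<close>.\<close>

lemma graph_finite_edges:
  assumes "graph V E"
  shows "finite E"
proof -
  have "E \<subseteq> Pow V" using assms by (auto simp: graph_def)
  then show ?thesis using assms finite_Pow_iff finite_subset by (metis graph_def)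
qed

lemma matching_mono_edges:
  assumes "matching E' M" "E' \<subseteq> E"
  shows "matching E M"
  using assms by (auto simp: matching_def)

lemma finite_matchings:
  assumes "finite E"
  shows "finite {M. matching E M}"
  using assms by (rule rev_finite_subset[OF finite_Pow_iff[THEN iffD2]]) (auto simp: matching_def)

lemma card_le_matching_number:
  assumes "finite E" "matching E M"
  shows "card M \<le> matching_number E"
  unfolding matching_number_def using finite_matchings[OF assms(1)] assms(2) by (intro Max_ge) auto

lemma ex_maximum_matching:
  assumes "finite E"
  obtains M where "matching E M" "card M = matching_number E"
proof -
  have "matching E {}" by (simp add: matching_def)
  then have "matching_number E \<in> card ` {M. matching E M}"
    unfolding matching_number_def using finite_matchings[OF assms] by (intro Max_in) auto
  then show ?thesis using that by auto
qed

lemma matching_number_mono: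
  assumes "finite E" "E' \<subseteq> E"
  shows "matching_number E' \<le> matching_number E"
proof -
  obtain M where "matching E' M" "card M = matching_number E'"
    using ex_maximum_matching finite_subset[OF assms(2,1)] by blast
  then show ?thesis using card_le_matching_number[OF assms(1)] matching_mono_edges assms(2) by metis
qed

lemma maximum_matching_is_maximal:
  assumes "finite E" "matching E M" "card M = matching_number E"
  shows "maximal_matching E M"
  unfolding maximal_matching_def
proof (intro conjI allI impI)
  fix M' assume M': "matching E M' \<and> M \<subseteq> M'"
  then have "finite M'" using assms(1) finite_subset by (auto simp: matching_def)
  moreover have "card M' \<le> card M" using card_le_matching_number[OF assms(1)] M' assms(3) by simp
  ultimately show "M' = M" using M' card_seteq by blast
qed (rule assms(2))

lemma ex_maximal_matching_superset:
  assumes "finite E" "matching E M"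
  obtains M' where "M \<subseteq> M'" "maximal_matching E M'"
proof -
  let ?P = "\<lambda>X. matching E X \<and> M \<subseteq> X"
  have "\<forall>X. ?P X \<longrightarrow> card X < card E + 1"
    using assms(1) card_mono by (fastforce simp: matching_def)
  then obtain X where X: "?P X" and greatest: "\<forall>Y. ?P Y \<longrightarrow> card Y \<le> card X"
    using ex_has_greatest_nat[of ?P M card "card E + 1"] assms(2) by blast
  have "maximal_matching E X"
    unfolding maximal_matching_def
  proof (intro conjI allI impI)
    fix M' assume M': "matching E M' \<and> X \<subseteq> M'"
    then have "finite M'" using assms(1) finite_subset by (auto simp: matching_def)
    moreover have "card M' \<le> card X" using greatest M' X by blast
    ultimately show "M' = X" using M' card_seteq by blast
  qed (use X in simp)
  then show ?thesis using that X by blast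
qed

lemma equimatchable_maximal_matching_card:
  assumes "finite E" "equimatchable E" "maximal_matching E M"
  shows "card M = matching_number E"
proof -
  obtain M0 where "matching E M0" "card M0 = matching_number E"
    using ex_maximum_matching[OF assms(1)] .
  with maximum_matching_is_maximal[OF assms(1)] assms(2,3) show ?thesis
    unfolding equimatchable_def by metis
qed

lemma equimatchable_matching_number_delete_edge:
  assumes "finite E" "equimatchable E" "e \<in> E" "f \<in> E" "f \<noteq> e" "f \<inter> e \<noteq> {}"
  shows "matching_number (E - {e}) = matching_number E"
proof -
  have "matching E {f}" using assms(4) by (simp add: matching_def)
  then obtain M where "f \<in> M" and M: "maximal_matching E M"
    using ex_maximal_matching_superset[OF assms(1)] by blast
  then have "e \<notin> M" using assms(5,6) by (auto simp: maximal_matching_def matching_def)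
  with M have "matching (E - {e}) M" by (auto simp: maximal_matching_def matching_def)
  then have "matching_number E \<le> matching_number (E - {e})"
    using card_le_matching_number equimatchable_maximal_matching_card[OF assms(1,2) M] assms(1)
    by (metis finite_Diff)
  with matching_number_mono[OF assms(1)] show ?thesis by (meson Diff_subset le_antisym)
qed

lemma walk_leaves_set_crosses_boundary:
  assumes "(x, z) \<in> {(x, y). {x, y} \<in> E}\<^sup>*" "x \<in> S" "z \<notin> S"
  shows "\<exists>f\<in>E. f \<inter> S \<noteq> {} \<and> \<not> f \<subseteq> S"
  using assms
proof (induction rule: rtrancl_induct)
  case (step y z)
  show ?case
  proof (cases "y \<in> S")
    case True
    then show ?thesis using step by (intro bexI[of _ "{y, z}"]) auto
  qed (use step in auto)
qed simp

theorem proposition2p1: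
  fixes V :: "'a set" and E :: "'a set set"
  assumes "graph V E"
    and "connected V E"
    and "edge_stable E"
    and "card V \<ge> 3"
  shows "\<forall>e\<in>E. matching_number E = matching_number (E - {e})"
proof
  fix e assume "e \<in> E"
  then have e: "e \<subseteq> V" "card e = 2" using assms(1) by (auto simp: graph_def)
  then obtain u where "u \<in> e" unfolding card_2_iff by blast
  have "\<not> V \<subseteq> e"
  proof
    assume "V \<subseteq> e"
    then have "card V \<le> card e" using e(2) by (intro card_mono) (auto intro: card_ge_0_finite)
    with e(2) assms(4) show False by simp
  qed
  then obtain w where "w \<in> V" "w \<notin> e" by blast
  moreover have "u \<in> V" using \<open>u \<in> e\<close> e(1) by blast
  ultimately have "(u, w) \<in> {(x, y). {x, y} \<in> E}\<^sup>*"
    using assms(2) by (simp add: connected_def)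
  from walk_leaves_set_crosses_boundary[OF this \<open>u \<in> e\<close> \<open>w \<notin> e\<close>]
  obtain f where "f \<in> E" "f \<inter> e \<noteq> {}" "\<not> f \<subseteq> e" by blast
  moreover have "equimatchable E" using assms(3) by (simp add: edge_stable_def)
  ultimately show "matching_number E = matching_number (E - {e})"
    using equimatchable_matching_number_delete_edge[OF graph_finite_edges[OF assms(1)] _ \<open>e \<in> E\<close>]
    by auto
qed

end
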